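(* Let $X$ and $Y$ be scalable monoids over a ring $R$. Then the tensor product $X\otimes Y$ is a scalable monoid over $R$.
   Context: A scalable monoid over a (unital, associative) ring $R$ is a monoid $X$ (identity $1_X$, product written $xy$) together with a map $R\times X\to X$, $(\alpha,x)\mapsto\alpha\cdot x$, such that $1\cdot x=x$, $\alpha\cdot(\beta\cdot x)=\alpha\beta\cdot x$ and $\alpha\cdot(xy)=(\alpha\cdot x)y=x(\alpha\cdot y)$. For scalable monoids $X,Y$ over $R$, define the relation $\backsim_\otimes$ on $X\times Y$ by $(x_1,y_1)\backsim_\otimes(x_2,y_2)$ iff $(\alpha\cdot x_1,\beta\cdot y_1)=(\beta\cdot x_2,\alpha\cdot y_2)$ for some $\alpha,\beta\in R$; it is an equivalence relation. Let $x\otimes y$ be the class of $(x,y)$ and $X\otimes Y=\{x\otimes y\mid x\in X,y\in Y\}$, equipped with $(x_1\otimes y_1)(x_2\otimes y_2)=x_1x_2\otimes y_1y_2$, $\lambda\cdot(x\otimes y)=(\lambda\cdot x)\otimes y$, and identity $1_X\otimes1_Y$. *)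

theory Defs
  imports Main
begin

definition scalable_monoid ::
  "'x set \<Rightarrow> ('x \<Rightarrow> 'x \<Rightarrow> 'x) \<Rightarrow> 'x \<Rightarrow> ('r::ring_1 \<Rightarrow> 'x \<Rightarrow> 'x) \<Rightarrow> bool" where
  "scalable_monoid X mult one sc \<longleftrightarrow>
     (\<forall>x\<in>X. \<forall>y\<in>X. mult x y \<in> X) \<and>
     (\<forall>x\<in>X. \<forall>y\<in>X. \<forall>z\<in>X. mult (mult x y) z = mult x (mult y z)) \<and>
     one \<in> X \<and>
     (\<forall>x\<in>X. mult one x = x \<and> mult x one = x) \<and>
     (\<forall>a. \<forall>x\<in>X. sc a x \<in> X) \<and>
     (\<forall>x\<in>X. sc 1 x = x) \<and>
     (\<forall>a b. \<forall>x\<in>X. sc a (sc b x) = sc (a * b) x) \<and>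
     (\<forall>a. \<forall>x\<in>X. \<forall>y\<in>X. sc a (mult x y) = mult (sc a x) y \<and> sc a (mult x y) = mult x (sc a y))"

definition tensor_rel ::
  "('r::ring_1 \<Rightarrow> 'x \<Rightarrow> 'x) \<Rightarrow> ('r \<Rightarrow> 'y \<Rightarrow> 'y) \<Rightarrow> 'x \<times> 'y \<Rightarrow> 'x \<times> 'y \<Rightarrow> bool" where
  "tensor_rel scX scY p q \<longleftrightarrow>
     (\<exists>a b. scX a (fst p) = scX b (fst q) \<and> scY b (snd p) = scY a (snd q))"

definition tens ::
  "'x set \<Rightarrow> 'y set \<Rightarrow> ('r::ring_1 \<Rightarrow> 'x \<Rightarrow> 'x) \<Rightarrow> ('r \<Rightarrow> 'y \<Rightarrow> 'y) \<Rightarrow> 'x \<Rightarrow> 'y \<Rightarrow> ('x \<times> 'y) set" where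
  "tens X Y scX scY x y = {q \<in> X \<times> Y. tensor_rel scX scY (x, y) q}"

definition tensor_carrier ::
  "'x set \<Rightarrow> 'y set \<Rightarrow> ('r::ring_1 \<Rightarrow> 'x \<Rightarrow> 'x) \<Rightarrow> ('r \<Rightarrow> 'y \<Rightarrow> 'y) \<Rightarrow> ('x \<times> 'y) set set" where
  "tensor_carrier X Y scX scY = {tens X Y scX scY x y | x y. x \<in> X \<and> y \<in> Y}"

text \<open>Operations on classes, defined via (arbitrarily chosen) representatives;
  that they do not depend on the choice is part of the content of the theorem.\<close>

definition tensor_mult ::
  "'x set \<Rightarrow> 'y set \<Rightarrow> ('r::ring_1 \<Rightarrow> 'x \<Rightarrow> 'x) \<Rightarrow> ('r \<Rightarrow> 'y \<Rightarrow> 'y) \<Rightarrow>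
   ('x \<Rightarrow> 'x \<Rightarrow> 'x) \<Rightarrow> ('y \<Rightarrow> 'y \<Rightarrow> 'y) \<Rightarrow> ('x \<times> 'y) set \<Rightarrow> ('x \<times> 'y) set \<Rightarrow> ('x \<times> 'y) set" where
  "tensor_mult X Y scX scY multX multY A B =
     (let p = (SOME p. p \<in> A); q = (SOME q. q \<in> B)
      in tens X Y scX scY (multX (fst p) (fst q)) (multY (snd p) (snd q)))"

definition tensor_one ::
  "'x set \<Rightarrow> 'y set \<Rightarrow> ('r::ring_1 \<Rightarrow> 'x \<Rightarrow> 'x) \<Rightarrow> ('r \<Rightarrow> 'y \<Rightarrow> 'y) \<Rightarrow> 'x \<Rightarrow> 'y \<Rightarrow> ('x \<times> 'y) set" where
  "tensor_one X Y scX scY oneX oneY = tens X Y scX scY oneX oneY"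

definition tensor_sc ::
  "'x set \<Rightarrow> 'y set \<Rightarrow> ('r::ring_1 \<Rightarrow> 'x \<Rightarrow> 'x) \<Rightarrow> ('r \<Rightarrow> 'y \<Rightarrow> 'y) \<Rightarrow> 'r \<Rightarrow> ('x \<times> 'y) set \<Rightarrow> ('x \<times> 'y) set" where
  "tensor_sc X Y scX scY l A =
     (let p = (SOME p. p \<in> A) in tens X Y scX scY (scX l (fst p)) (snd p))"

end

theory Submission
  imports Defs
begin

text \<open>Writing \<open>x = x 1\<close> and moving scalars through products shows that the scalars of a
  scalable monoid act commutatively, even though \<open>R\<close> need not be commutative. This makes
  \<open>\<backsim>\<^sub>\<otimes>\<close> transitive, and products and scalings of related pairs are again related (multiply
  the witnessing scalars). Hence the operations on classes do not depend on the chosen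
  representatives, and the monoid and action laws descend from \<open>X \<times> Y\<close> to \<open>X \<otimes> Y\<close>.\<close>

lemma scalable_monoidD:
  assumes "scalable_monoid X mult one sc"
  shows scalable_monoid_mult_closed: "\<lbrakk>x \<in> X; y \<in> X\<rbrakk> \<Longrightarrow> mult x y \<in> X"
    and scalable_monoid_mult_assoc:
      "\<lbrakk>x \<in> X; y \<in> X; z \<in> X\<rbrakk> \<Longrightarrow> mult (mult x y) z = mult x (mult y z)"
    and scalable_monoid_one_closed: "one \<in> X"
    and scalable_monoid_mult_one_left: "x \<in> X \<Longrightarrow> mult one x = x"
    and scalable_monoid_mult_one_right: "x \<in> X \<Longrightarrow> mult x one = x"
    and scalable_monoid_scale_closed: "x \<in> X \<Longrightarrow> sc a x \<in> X"
    and scalable_monoid_scale_one: "x \<in> X \<Longrightarrow> sc 1 x = x"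
    and scalable_monoid_scale_scale: "x \<in> X \<Longrightarrow> sc a (sc b x) = sc (a * b) x"
    and scalable_monoid_scale_mult_left: "\<lbrakk>x \<in> X; y \<in> X\<rbrakk> \<Longrightarrow> sc a (mult x y) = mult (sc a x) y"
    and scalable_monoid_scale_mult_right: "\<lbrakk>x \<in> X; y \<in> X\<rbrakk> \<Longrightarrow> sc a (mult x y) = mult x (sc a y)"
  using assms unfolding scalable_monoid_def by blast+

context
  fixes X :: "'x set" and mult :: "'x \<Rightarrow> 'x \<Rightarrow> 'x" and one :: 'x and sc :: "'r::ring_1 \<Rightarrow> 'x \<Rightarrow> 'x"
  assumes X: "scalable_monoid X mult one sc"
begin

lemma scalable_monoid_scale_commute:
  assumes "x \<in> X"
  shows "sc a (sc b x) = sc b (sc a x)"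
proof -
  note sm = scalable_monoidD[OF X]
  have "sc a (sc b x) = sc a (mult x (sc b one))"
    using assms sm by metis
  also have "\<dots> = mult (sc a x) (sc b one)"
    using assms sm by metis
  also have "\<dots> = sc b (sc a x)"
    using assms sm by metis
  finally show ?thesis .
qed

lemma scalable_monoid_mult_scale_swap:
  "\<lbrakk>x \<in> X; y \<in> X\<rbrakk> \<Longrightarrow> mult (sc a x) y = mult x (sc a y)"
  using scalable_monoidD[OF X] by metis

lemma scalable_monoid_scale_mult_scale:
  assumes "x \<in> X" "y \<in> X"
  shows "sc (a * b) (mult x y) = mult (sc a x) (sc b y)"
  using assms scalable_monoidD[OF X] by metis

end

lemma tensor_rel_refl: "tensor_rel scX scY p p"
  unfolding tensor_rel_def by blast

lemma tensor_rel_sym: "tensor_rel scX scY p q \<Longrightarrow> tensor_rel scX scY q p"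
  unfolding tensor_rel_def by metis

lemma tens_in_tensor_carrier:
  "\<lbrakk>x \<in> X; y \<in> Y\<rbrakk> \<Longrightarrow> tens X Y scX scY x y \<in> tensor_carrier X Y scX scY"
  unfolding tensor_carrier_def by blast

lemma tensor_carrier_ball_iff:
  "(\<forall>A \<in> tensor_carrier X Y scX scY. P A) \<longleftrightarrow> (\<forall>x \<in> X. \<forall>y \<in> Y. P (tens X Y scX scY x y))"
  unfolding tensor_carrier_def by blast

context
  fixes X :: "'x set" and Y :: "'y set"
    and multX :: "'x \<Rightarrow> 'x \<Rightarrow> 'x" and multY :: "'y \<Rightarrow> 'y \<Rightarrow> 'y"
    and oneX :: 'x and oneY :: 'y
    and scX :: "'r::ring_1 \<Rightarrow> 'x \<Rightarrow> 'x" and scY :: "'r \<Rightarrow> 'y \<Rightarrow> 'y"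
  assumes X: "scalable_monoid X multX oneX scX"
    and Y: "scalable_monoid Y multY oneY scY"
begin

lemma tensor_rel_trans:
  assumes "p \<in> X \<times> Y" "q \<in> X \<times> Y" "r \<in> X \<times> Y"
    and "tensor_rel scX scY p q" "tensor_rel scX scY q r"
  shows "tensor_rel scX scY p r"
proof -
  obtain a b c d where
    pq: "scX a (fst p) = scX b (fst q)" "scY b (snd p) = scY a (snd q)" and
    qr: "scX c (fst q) = scX d (fst r)" "scY d (snd q) = scY c (snd r)"
    using assms(4,5) unfolding tensor_rel_def by blast
  have in_X: "fst p \<in> X" "fst q \<in> X" "fst r \<in> X"
    and in_Y: "snd p \<in> Y" "snd q \<in> Y" "snd r \<in> Y"
    using assms(1-3) by auto
  note scaleX = scalable_monoid_scale_scale[OF X] scalable_monoid_scale_commute[OF X]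
  note scaleY = scalable_monoid_scale_scale[OF Y] scalable_monoid_scale_commute[OF Y]
  have "scX (c * a) (fst p) = scX c (scX b (fst q))"
    using in_X pq by (simp add: scaleX(1)[symmetric])
  also have "\<dots> = scX b (scX d (fst r))"
    using in_X qr by (simp add: scaleX(2))
  also have "\<dots> = scX (b * d) (fst r)"
    using in_X by (simp add: scaleX(1))
  finally have first: "scX (c * a) (fst p) = scX (b * d) (fst r)" .
  have "scY (b * d) (snd p) = scY d (scY a (snd q))"
    using in_Y pq by (metis scaleY)
  also have "\<dots> = scY a (scY c (snd r))"
    using in_Y qr by (metis scaleY(2))
  also have "\<dots> = scY (c * a) (snd r)"
    using in_Y by (metis scaleY)
  finally show ?thesis
    using first unfolding tensor_rel_def by blast
qed

lemma tens_eq_iff: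
  assumes "x \<in> X" "y \<in> Y" "x' \<in> X" "y' \<in> Y"
  shows "tens X Y scX scY x y = tens X Y scX scY x' y' \<longleftrightarrow> tensor_rel scX scY (x, y) (x', y')"
proof
  assume "tens X Y scX scY x y = tens X Y scX scY x' y'"
  moreover have "(x', y') \<in> tens X Y scX scY x' y'"
    using assms unfolding tens_def by (simp add: tensor_rel_refl)
  ultimately show "tensor_rel scX scY (x, y) (x', y')"
    unfolding tens_def by blast
next
  assume "tensor_rel scX scY (x, y) (x', y')"
  then show "tens X Y scX scY x y = tens X Y scX scY x' y'"
    using assms unfolding tens_def by (blast intro: tensor_rel_trans tensor_rel_sym)
qed

lemma tens_some_rep:
  assumes "x \<in> X" "y \<in> Y"
  shows "(SOME p. p \<in> tens X Y scX scY x y) \<in> X \<times> Y"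
    and "tensor_rel scX scY (x, y) (SOME p. p \<in> tens X Y scX scY x y)"
proof -
  have "(x, y) \<in> tens X Y scX scY x y"
    using assms unfolding tens_def by (simp add: tensor_rel_refl)
  then have "(SOME p. p \<in> tens X Y scX scY x y) \<in> tens X Y scX scY x y"
    by (rule someI)
  then show "(SOME p. p \<in> tens X Y scX scY x y) \<in> X \<times> Y"
    and "tensor_rel scX scY (x, y) (SOME p. p \<in> tens X Y scX scY x y)"
    unfolding tens_def by blast+
qed

lemma tensor_rel_mult:
  assumes "x1 \<in> X" "y1 \<in> Y" "x1' \<in> X" "y1' \<in> Y" "x2 \<in> X" "y2 \<in> Y" "x2' \<in> X" "y2' \<in> Y"
    and "tensor_rel scX scY (x1, y1) (x1', y1')" "tensor_rel scX scY (x2, y2) (x2', y2')"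
  shows "tensor_rel scX scY (multX x1 x2, multY y1 y2) (multX x1' x2', multY y1' y2')"
proof -
  obtain a b c d where
    "scX a x1 = scX b x1'" "scY b y1 = scY a y1'" "scX c x2 = scX d x2'" "scY d y2 = scY c y2'"
    using assms(9,10) unfolding tensor_rel_def by auto
  then have "scX (a * c) (multX x1 x2) = scX (b * d) (multX x1' x2')"
    and "scY (b * d) (multY y1 y2) = scY (a * c) (multY y1' y2')"
    using assms(1-8)
    by (simp_all add: scalable_monoid_scale_mult_scale[OF X] scalable_monoid_scale_mult_scale[OF Y])
  then show ?thesis
    unfolding tensor_rel_def by auto
qed

lemma tensor_rel_scale:
  assumes "x \<in> X" "x' \<in> X" "tensor_rel scX scY (x, y) (x', y')"
  shows "tensor_rel scX scY (scX l x, y) (scX l x', y')"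
proof -
  obtain a b where ab: "scX a x = scX b x'" "scY b y = scY a y'"
    using assms(3) unfolding tensor_rel_def by auto
  have "scX a (scX l x) = scX l (scX a x)" "scX b (scX l x') = scX l (scX b x')"
    using assms(1,2) by (simp_all add: scalable_monoid_scale_commute[OF X])
  then have "scX a (scX l x) = scX b (scX l x')"
    using ab(1) by simp
  then show ?thesis
    using ab(2) unfolding tensor_rel_def by auto
qed

lemma tensor_mult_tens:
  assumes "x1 \<in> X" "y1 \<in> Y" "x2 \<in> X" "y2 \<in> Y"
  shows "tensor_mult X Y scX scY multX multY (tens X Y scX scY x1 y1) (tens X Y scX scY x2 y2)
    = tens X Y scX scY (multX x1 x2) (multY y1 y2)"
proof -
  obtain x1' y1' where p: "(SOME p. p \<in> tens X Y scX scY x1 y1) = (x1', y1')"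
    by fastforce
  obtain x2' y2' where q: "(SOME q. q \<in> tens X Y scX scY x2 y2) = (x2', y2')"
    by fastforce
  have rep: "x1' \<in> X" "y1' \<in> Y" "tensor_rel scX scY (x1, y1) (x1', y1')"
    "x2' \<in> X" "y2' \<in> Y" "tensor_rel scX scY (x2, y2) (x2', y2')"
    using tens_some_rep[of x1 y1] tens_some_rep[of x2 y2] assms unfolding p q by auto
  then have "tensor_rel scX scY (multX x1' x2', multY y1' y2') (multX x1 x2, multY y1 y2)"
    using assms by (blast intro: tensor_rel_sym tensor_rel_mult)
  then have "tens X Y scX scY (multX x1' x2') (multY y1' y2')
      = tens X Y scX scY (multX x1 x2) (multY y1 y2)"
    using assms rep
    by (simp add: tens_eq_iff scalable_monoid_mult_closed[OF X] scalable_monoid_mult_closed[OF Y])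
  then show ?thesis
    unfolding tensor_mult_def Let_def p q by simp
qed

lemma tensor_sc_tens:
  assumes "x \<in> X" "y \<in> Y"
  shows "tensor_sc X Y scX scY l (tens X Y scX scY x y) = tens X Y scX scY (scX l x) y"
proof -
  obtain x' y' where p: "(SOME p. p \<in> tens X Y scX scY x y) = (x', y')"
    by fastforce
  have rep: "x' \<in> X" "y' \<in> Y" "tensor_rel scX scY (x, y) (x', y')"
    using tens_some_rep[of x y] assms unfolding p by auto
  then have "tensor_rel scX scY (scX l x', y') (scX l x, y)"
    using assms by (blast intro: tensor_rel_sym tensor_rel_scale)
  then have "tens X Y scX scY (scX l x') y' = tens X Y scX scY (scX l x) y"
    using assms rep by (simp add: tens_eq_iff scalable_monoid_scale_closed[OF X])
  then show ?thesis
    unfolding tensor_sc_def Let_def p by simp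
qed

end

theorem proposition2p21:
  fixes X :: "'x set" and Y :: "'y set"
    and multX :: "'x \<Rightarrow> 'x \<Rightarrow> 'x" and multY :: "'y \<Rightarrow> 'y \<Rightarrow> 'y"
    and oneX :: 'x and oneY :: 'y
    and scX :: "'r::ring_1 \<Rightarrow> 'x \<Rightarrow> 'x" and scY :: "'r \<Rightarrow> 'y \<Rightarrow> 'y"
  assumes "scalable_monoid X multX oneX scX"
    and "scalable_monoid Y multY oneY scY"
  shows "scalable_monoid (tensor_carrier X Y scX scY)
           (tensor_mult X Y scX scY multX multY)
           (tensor_one X Y scX scY oneX oneY)
           (tensor_sc X Y scX scY)"
  unfolding scalable_monoid_def tensor_one_def tensor_carrier_ball_iff
  using assms
  by (simp add: tens_in_tensor_carrier tensor_mult_tens tensor_sc_tens scalable_monoidD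
      scalable_monoid_mult_scale_swap)

end
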